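(* Let $A$ be an $n\times n\times n$ ASHM and $P$ an $n\times n\times n$ permutation hypermatrix. Then $L(A)\preceq_l L(P)$; that is, every row and every column of $L(A)$ is majorized by $z_n=(n,n-1,\ldots,1)$.
   Context: An $n\times n$ alternating sign matrix (ASM) is an $n\times n$ matrix with entries in $\{0,1,-1\}$ such that in every row and column the nonzeros alternate in sign, beginning and ending with $+1$. An $n\times n\times n$ hypermatrix $A=[a_{ijk}]$ is written $A=[A_1,\ldots,A_n]$ with $A_k=[a_{ijk}]_{i,j}$; lines are obtained by fixing two of the three indices. $A$ is an ASHM if all entries lie in $\{0,\pm1\}$ and in every line the nonzeros alternate in sign beginning and ending with $+1$. A permutation hypermatrix is a $(0,1)$-hypermatrix with exactly one $1$ in each line. For an ASHM, $L(A)=1A_1+2A_2+\cdots+nA_n$. For $x,y\in\mathbb R^n$, $x$ is majorized by $y$ ($x\preceq y$) if $\sum_{j=1}^k x_{[j]}\le\sum_{j=1}^k y_{[j]}$ for all $k\le n$ with equality for $k=n$, where $x_{[j]}$ is the $j$-th largest component of $x$. For matrices $X,Y$ of equal size, $X\preceq_l Y$ means every row (column) of $X$ is majorized by the corresponding row (column) of $Y$. *)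

theory Defs
  imports Complex_Main
begin

(* Hypermatrices of size n x n x n are functions nat => nat => nat => int,
   with indices i, j, k ranging over {0..<n} (0-based). *)

type_synonym hypermatrix = "nat \<Rightarrow> nat \<Rightarrow> nat \<Rightarrow> int"

definition alt_sign_line :: "int list \<Rightarrow> bool" where
  "alt_sign_line xs \<longleftrightarrow>
     (let ys = filter (\<lambda>x. x \<noteq> 0) xs in
        ys \<noteq> [] \<and> (\<forall>t<length ys. ys ! t = (if even t then 1 else -1))
        \<and> last ys = 1)"

definition ASHM :: "nat \<Rightarrow> hypermatrix \<Rightarrow> bool" where
  "ASHM n A \<longleftrightarrow>
     (\<forall>i<n. \<forall>j<n. \<forall>k<n. A i j k \<in> {-1, 0, 1}) \<and>
     (\<forall>i<n. \<forall>j<n. alt_sign_line (map (\<lambda>k. A i j k) [0..<n])) \<and>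
     (\<forall>i<n. \<forall>k<n. alt_sign_line (map (\<lambda>j. A i j k) [0..<n])) \<and>
     (\<forall>j<n. \<forall>k<n. alt_sign_line (map (\<lambda>i. A i j k) [0..<n]))"

definition perm_hypermatrix :: "nat \<Rightarrow> hypermatrix \<Rightarrow> bool" where
  "perm_hypermatrix n P \<longleftrightarrow>
     (\<forall>i<n. \<forall>j<n. \<forall>k<n. P i j k \<in> {0, 1}) \<and>
     (\<forall>i<n. \<forall>j<n. card {k. k < n \<and> P i j k = 1} = 1) \<and>
     (\<forall>i<n. \<forall>k<n. card {j. j < n \<and> P i j k = 1} = 1) \<and>
     (\<forall>j<n. \<forall>k<n. card {i. i < n \<and> P i j k = 1} = 1)"

(* L(A) = 1 A_1 + ... + n A_n; with 0-based slice index k the weight is k+1.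
   The result is an n x n matrix, indices i, j < n. *)
definition Lmat :: "nat \<Rightarrow> hypermatrix \<Rightarrow> nat \<Rightarrow> nat \<Rightarrow> real" where
  "Lmat n A i j = (\<Sum>k<n. real (k + 1) * of_int (A i j k))"

definition decr :: "nat \<Rightarrow> (nat \<Rightarrow> real) \<Rightarrow> real list" where
  "decr n x = rev (sort (map x [0..<n]))"

definition majorized :: "nat \<Rightarrow> (nat \<Rightarrow> real) \<Rightarrow> (nat \<Rightarrow> real) \<Rightarrow> bool" where
  "majorized n x y \<longleftrightarrow>
     (\<forall>m\<le>n. (\<Sum>t<m. decr n x ! t) \<le> (\<Sum>t<m. decr n y ! t)) \<and>
     (\<Sum>t<n. decr n x ! t) = (\<Sum>t<n. decr n y ! t)"

definition lmaj :: "nat \<Rightarrow> (nat \<Rightarrow> nat \<Rightarrow> real) \<Rightarrow> (nat \<Rightarrow> nat \<Rightarrow> real) \<Rightarrow> bool" where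
  "lmaj n X Y \<longleftrightarrow>
     (\<forall>i<n. majorized n (\<lambda>j. X i j) (\<lambda>j. Y i j)) \<and>
     (\<forall>j<n. majorized n (\<lambda>i. X i j) (\<lambda>i. Y i j))"

definition zvec :: "nat \<Rightarrow> nat \<Rightarrow> real" where
  "zvec n t = real n - real t"

end

theory Submission
  imports Defs "HOL-Combinatorics.Permutations"
begin

text \<open>
  Fix one slice b of A (rows j, layers k), so that its rows and its columns are alternating
  sign lines, and let x_j = sum_k (k+1) b_jk. Summation by parts gives x_j = sum_q s_jq with
  the suffix sums s_jq = sum_{k >= q} b_jk. Suffix sums of an alternating sign line are 0 or 1,
  and the alternation of the columns gives sum_j s_jq = n - q. Hence any m rows collect at most
  sum_q min(m, n - q) = n + (n-1) + ... + (n-m+1), with equality for m = n: this is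
  majorization by z_n. The rows and columns of L(P) are permutations of z_n, so majorization
  by L(P) is the same statement.
\<close>

lemma sum_list_filter_nonzero:
  "sum_list (filter (\<lambda>x. x \<noteq> 0) xs) = sum_list (xs :: 'a::monoid_add list)"
  using sum_list_map_filter[of xs "\<lambda>x. x \<noteq> 0" id] by simp

lemma sum_list_take_alternating:
  assumes "\<forall>t<length ys. ys ! t = (if even t then (1::int) else -1)" and "r \<le> length ys"
  shows "sum_list (take r ys) = (if even r then 0 else 1)"
  using assms(2)
proof (induction r)
  case (Suc r)
  then have "take (Suc r) ys = take r ys @ [ys ! r]" by (simp add: take_Suc_conv_app_nth)
  with Suc assms(1) show ?case by auto
qed simp

lemma alt_sign_line_sum:
  assumes "alt_sign_line xs"
  shows "sum_list xs = 1"
proof -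
  define ys where "ys = filter (\<lambda>x. x \<noteq> 0) xs"
  have ne: "ys \<noteq> []" and alt: "\<forall>t<length ys. ys ! t = (if even t then 1 else -1)"
    and "last ys = 1"
    using assms unfolding alt_sign_line_def ys_def Let_def by auto
  then have "ys ! (length ys - 1) = 1" by (simp add: last_conv_nth)
  with alt ne have "odd (length ys)"
    by (metis One_nat_def diff_Suc_less even_Suc length_greater_0_conv Suc_pred one_neq_neg_one)
  then show ?thesis
    using sum_list_take_alternating[OF alt, of "length ys"]
    by (metis order_refl take_all ys_def sum_list_filter_nonzero)
qed

lemma alt_sign_line_prefix_sum:
  assumes "alt_sign_line xs"
  shows "sum_list (take d xs) \<in> {0, 1}"
proof -
  define ys where "ys = filter (\<lambda>x. x \<noteq> 0) xs"
  define zs where "zs = filter (\<lambda>x. x \<noteq> 0) (take d xs)"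
  have alt: "\<forall>t<length ys. ys ! t = (if even t then 1 else -1)"
    using assms unfolding alt_sign_line_def ys_def Let_def by auto
  have "ys = zs @ filter (\<lambda>x. x \<noteq> 0) (drop d xs)"
    unfolding ys_def zs_def by (metis append_take_drop_id filter_append)
  then have "zs = take (length zs) ys" and "length zs \<le> length ys"
    by simp_all
  then have "sum_list zs \<in> {0, 1}"
    using sum_list_take_alternating[OF alt] by (metis insertCI)
  then show ?thesis by (simp add: zs_def sum_list_filter_nonzero)
qed

lemma alt_sign_line_upt_sum:
  assumes "alt_sign_line (map f [0..<n])"
  shows "(\<Sum>k<n. f k) = 1"
  using alt_sign_line_sum[OF assms] by (simp add: interv_sum_list_conv_sum_set_nat atLeast0LessThan)

lemma alt_sign_line_upt_suffix_sum:
  assumes "alt_sign_line (map f [0..<n])" and "q \<le> n"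
  shows "(\<Sum>k=q..<n. f k) \<in> {0, 1}"
proof -
  have "take q (map f [0..<n]) = map f [0..<q]"
    using \<open>q \<le> n\<close> by (simp add: take_map)
  then have "(\<Sum>k<q. f k) \<in> {0, 1}"
    using alt_sign_line_prefix_sum[OF assms(1), of q]
    by (simp add: interv_sum_list_conv_sum_set_nat atLeast0LessThan)
  moreover have "(\<Sum>k=q..<n. f k) = (\<Sum>k<n. f k) - (\<Sum>k<q. f k)"
    using \<open>q \<le> n\<close> by (simp add: sum_diff_nat_ivl lessThan_atLeast0)
  ultimately show ?thesis
    using alt_sign_line_upt_sum[OF assms(1)] by auto
qed

lemma sum_weighted_eq_sum_suffix_sums:
  fixes b :: "nat \<Rightarrow> 'a::comm_semiring_1"
  shows "(\<Sum>k<n. of_nat (Suc k) * b k) = (\<Sum>q<n. \<Sum>k=q..<n. b k)"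
proof (induction n)
  case (Suc n)
  have "(\<Sum>q<Suc n. \<Sum>k=q..<Suc n. b k) = (\<Sum>q<Suc n. (\<Sum>k=q..<n. b k) + b n)"
    by (intro sum.cong) auto
  also have "\<dots> = (\<Sum>q<n. \<Sum>k=q..<n. b k) + of_nat (Suc n) * b n"
    by (simp add: sum.distrib algebra_simps)
  finally show ?case using Suc by simp
qed simp

lemma sum_min_diff_eq:
  fixes m n :: nat
  assumes "m \<le> n"
  shows "(\<Sum>q<n. min m (n - q)) = (\<Sum>t<m. n - t)"
  using assms
proof (induction m)
  case (Suc m)
  have "(\<Sum>q<n. min (Suc m) (n - q)) = (\<Sum>q<n. min m (n - q) + (if q < n - m then 1 else 0))"
    using Suc.prems by (intro sum.cong) auto
  also have "\<dots> = (\<Sum>q<n. min m (n - q)) + (n - m)"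
  proof -
    have "{q. q < n \<and> q < n - m} = {..<n - m}" by auto
    then show ?thesis by (simp add: sum.distrib sum.If_cases Int_def)
  qed
  finally show ?case using Suc by simp
qed simp

lemma sum_subset_le_min_card:
  fixes c :: "'a \<Rightarrow> 'b::linordered_semidom"
  assumes "finite T" and "S \<subseteq> T" and "\<And>x. x \<in> T \<Longrightarrow> c x \<in> {0, 1}"
  shows "sum c S \<le> min (of_nat (card S)) (sum c T)"
proof -
  have "sum c S \<le> (\<Sum>x\<in>S. 1)"
    using assms by (intro sum_mono) fastforce
  moreover have "sum c S \<le> sum c T"
    using assms by (intro sum_mono2) fastforce+
  ultimately show ?thesis by simp
qed

lemma decr_cong: "(\<And>j. j < n \<Longrightarrow> x j = y j) \<Longrightarrow> decr n x = decr n y"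
  unfolding decr_def by (intro arg_cong[where f = "\<lambda>xs. rev (sort xs)"] map_cong) auto

lemma decr_reindex:
  assumes "bij_betw g {..<n} {..<n}"
  shows "decr n (\<lambda>j. x (g j)) = decr n x"
proof -
  have "image_mset g (mset_set {..<n}) = mset_set {..<n}"
    using assms by (simp add: image_mset_mset_set bij_betw_def)
  then have "mset (map x [0..<n]) = mset (map (\<lambda>j. x (g j)) [0..<n])"
    using image_mset.compositionality[of x g "mset_set {..<n}"]
    by (simp add: comp_def atLeast0LessThan)
  then have "sort (map (\<lambda>j. x (g j)) [0..<n]) = sort (map x [0..<n])"
    by (intro properties_for_sort) simp_all
  then show ?thesis
    by (simp add: decr_def)
qed

lemma decr_nth_perm: "\<exists>g. bij_betw g {..<n} {..<n} \<and> (\<forall>t<n. decr n x ! t = x (g t))"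
proof -
  have "mset (decr n x) = mset (map x [0..<n])"
    by (simp add: decr_def)
  from mset_eq_permutation[OF this] obtain p
    where p: "p permutes {..<n}" and "permute_list p (map x [0..<n]) = decr n x"
    by auto
  then have "decr n x ! t = x (p t)" if "t < n" for t
  proof -
    have "p t < n" using permutes_in_image[OF p] that by simp
    then show ?thesis
      using that p \<open>permute_list p (map x [0..<n]) = decr n x\<close>
      by (metis permute_list_nth length_map length_upt diff_zero nth_map_upt add_0)
  qed
  then show ?thesis
    using permutes_imp_bij[OF p] by blast
qed

lemma decr_zvec_nth:
  assumes "t < n"
  shows "decr n (zvec n) ! t = real n - real t"
proof -
  have "sort (map (zvec n) [0..<n]) = rev (map (zvec n) [0..<n])"
    by (rule properties_for_sort) (auto simp: sorted_iff_nth_mono rev_nth zvec_def)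
  then show ?thesis
    using assms by (simp add: decr_def zvec_def)
qed

lemma decr_zvec: "decr n (zvec n) = decr n (\<lambda>t. real (Suc t))"
proof -
  have "bij_betw (\<lambda>t. n - 1 - t) {..<n} {..<n}"
    by (rule bij_betw_byWitness[where f' = "\<lambda>t. n - 1 - t"]) auto
  then have "decr n (\<lambda>t. real (Suc (n - 1 - t))) = decr n (\<lambda>t. real (Suc t))"
    by (rule decr_reindex)
  moreover have "decr n (zvec n) = decr n (\<lambda>t. real (Suc (n - 1 - t)))"
    by (rule decr_cong) (simp add: zvec_def of_nat_diff)
  ultimately show ?thesis by simp
qed

lemma majorized_zvecI:
  assumes subset: "\<And>S. S \<subseteq> {..<n} \<Longrightarrow> sum x S \<le> (\<Sum>t<card S. real n - real t)"
    and total: "sum x {..<n} = (\<Sum>t<n. real n - real t)"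
  shows "majorized n x (zvec n)"
proof -
  obtain g where g: "bij_betw g {..<n} {..<n}" and nth: "\<forall>t<n. decr n x ! t = x (g t)"
    using decr_nth_perm by blast
  have top: "(\<Sum>t<m. decr n x ! t) = sum x (g ` {..<m})"
    and card: "card (g ` {..<m}) = m" and sub: "g ` {..<m} \<subseteq> {..<n}" if "m \<le> n" for m
  proof -
    have inj: "inj_on g {..<m}"
      using g that by (auto simp: bij_betw_def intro: inj_on_subset)
    then show "card (g ` {..<m}) = m"
      by (simp add: card_image)
    show "(\<Sum>t<m. decr n x ! t) = sum x (g ` {..<m})"
      using that nth inj by (simp add: sum.reindex)
    show "g ` {..<m} \<subseteq> {..<n}"
      using g that by (auto simp: bij_betw_def)
  qed
  have zvec_top: "(\<Sum>t<m. decr n (zvec n) ! t) = (\<Sum>t<m. real n - real t)" if "m \<le> n" for m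
    using that decr_zvec_nth by (intro sum.cong) auto
  show ?thesis
    unfolding majorized_def
  proof (intro conjI allI impI)
    fix m assume "m \<le> n"
    then show "(\<Sum>t<m. decr n x ! t) \<le> (\<Sum>t<m. decr n (zvec n) ! t)"
      using subset[OF sub] top card zvec_top by simp
  next
    have "g ` {..<n} = {..<n}"
      using g by (simp add: bij_betw_def)
    then show "(\<Sum>t<n. decr n x ! t) = (\<Sum>t<n. decr n (zvec n) ! t)"
      using top[of n] zvec_top[of n] total by simp
  qed
qed

lemma zero_one_rows_majorized_zvec:
  fixes c :: "nat \<Rightarrow> nat \<Rightarrow> real"
  assumes c01: "\<And>j q. j < n \<Longrightarrow> q < n \<Longrightarrow> c j q \<in> {0, 1}"
    and col_sum: "\<And>q. q < n \<Longrightarrow> (\<Sum>j<n. c j q) = real (n - q)"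
  shows "majorized n (\<lambda>j. \<Sum>q<n. c j q) (zvec n)"
proof (rule majorized_zvecI)
  fix S assume S: "S \<subseteq> {..<n}"
  then have "card S \<le> n"
    using card_mono[OF finite_lessThan S] by simp
  have "(\<Sum>j\<in>S. \<Sum>q<n. c j q) = (\<Sum>q<n. \<Sum>j\<in>S. c j q)"
    by (rule sum.swap)
  also have "\<dots> \<le> (\<Sum>q<n. min (real (card S)) (real (n - q)))"
  proof (rule sum_mono)
    fix q assume q: "q \<in> {..<n}"
    have "(\<Sum>j\<in>S. c j q) \<le> min (of_nat (card S)) (\<Sum>j<n. c j q)"
      by (rule sum_subset_le_min_card) (use S c01 q in auto)
    then show "(\<Sum>j\<in>S. c j q) \<le> min (real (card S)) (real (n - q))"
      using col_sum q by simp
  qed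
  also have "\<dots> = real (\<Sum>q<n. min (card S) (n - q))"
    by (simp only: of_nat_sum of_nat_min)
  also have "\<dots> = real (\<Sum>t<card S. n - t)"
    using sum_min_diff_eq[OF \<open>card S \<le> n\<close>] by (rule arg_cong)
  also have "\<dots> = (\<Sum>t<card S. real n - real t)"
    unfolding of_nat_sum using \<open>card S \<le> n\<close> by (intro sum.cong) (simp_all add: of_nat_diff)
  finally show "(\<Sum>j\<in>S. \<Sum>q<n. c j q) \<le> (\<Sum>t<card S. real n - real t)" .
next
  have "(\<Sum>j<n. \<Sum>q<n. c j q) = (\<Sum>q<n. \<Sum>j<n. c j q)"
    by (rule sum.swap)
  also have "\<dots> = (\<Sum>q<n. real (n - q))"
    using col_sum by (intro sum.cong) simp_all
  also have "\<dots> = (\<Sum>t<n. real n - real t)"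
    by (intro sum.cong) (simp_all add: of_nat_diff)
  finally show "(\<Sum>j<n. \<Sum>q<n. c j q) = (\<Sum>t<n. real n - real t)" .
qed

definition alt_sign_matrix :: "nat \<Rightarrow> (nat \<Rightarrow> nat \<Rightarrow> int) \<Rightarrow> bool" where
  "alt_sign_matrix n B \<longleftrightarrow>
     (\<forall>j<n. alt_sign_line (map (B j) [0..<n])) \<and>
     (\<forall>k<n. alt_sign_line (map (\<lambda>j. B j k) [0..<n]))"

lemma alt_sign_matrix_weighted_rows_majorized:
  assumes "alt_sign_matrix n B"
  shows "majorized n (\<lambda>j. \<Sum>k<n. real (k + 1) * of_int (B j k)) (zvec n)"
proof -
  define s where "s j q = (\<Sum>k=q..<n. real_of_int (B j k))" for j q
  have rows: "alt_sign_line (map (B j) [0..<n])" if "j < n" for j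
    using assms that by (simp add: alt_sign_matrix_def)
  have cols: "alt_sign_line (map (\<lambda>j. B j k) [0..<n])" if "k < n" for k
    using assms that by (simp add: alt_sign_matrix_def)
  have "s j q \<in> {0, 1}" if "j < n" "q < n" for j q
  proof -
    have "(\<Sum>k=q..<n. B j k) \<in> {0, 1}"
      using alt_sign_line_upt_suffix_sum[OF rows[OF that(1)]] that(2) by simp
    moreover have "s j q = of_int (\<Sum>k=q..<n. B j k)"
      by (simp add: s_def)
    ultimately show ?thesis
      by (metis insert_iff of_int_0 of_int_1 singletonD)
  qed
  moreover have "(\<Sum>j<n. s j q) = real (n - q)" if "q < n" for q
  proof -
    have "(\<Sum>j<n. s j q) = (\<Sum>k=q..<n. \<Sum>j<n. real_of_int (B j k))"
      unfolding s_def by (rule sum.swap)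
    also have "\<dots> = (\<Sum>k=q..<n. 1)"
      using alt_sign_line_upt_sum[OF cols]
      by (intro sum.cong) (simp_all, metis of_int_1 of_int_sum)
    finally show ?thesis by simp
  qed
  ultimately have "majorized n (\<lambda>j. \<Sum>q<n. s j q) (zvec n)"
    by (rule zero_one_rows_majorized_zvec)
  moreover have "(\<Sum>k<n. real (k + 1) * of_int (B j k)) = (\<Sum>q<n. s j q)" for j
    using sum_weighted_eq_sum_suffix_sums[where b = "\<lambda>k. real_of_int (B j k)"]
    by (simp add: s_def)
  ultimately show ?thesis
    by simp
qed

definition perm_matrix :: "nat \<Rightarrow> (nat \<Rightarrow> nat \<Rightarrow> int) \<Rightarrow> bool" where
  "perm_matrix n Q \<longleftrightarrow>
     (\<forall>a<n. \<forall>k<n. Q a k \<in> {0, 1}) \<and>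
     (\<forall>a<n. card {k. k < n \<and> Q a k = 1} = 1) \<and>
     (\<forall>k<n. card {a. a < n \<and> Q a k = 1} = 1)"

lemma weighted_sum_unit_line:
  assumes "\<forall>k<n. q k \<in> {0, 1}" and "{k. k < n \<and> q k = 1} = {k\<^sub>0}"
  shows "(\<Sum>k<n. real (k + 1) * of_int (q k)) = real (k\<^sub>0 + 1)"
proof -
  have one: "k < n \<and> q k = 1 \<longleftrightarrow> k = k\<^sub>0" for k
    using assms(2) by (simp add: set_eq_iff)
  then have "q k = (if k = k\<^sub>0 then 1 else 0)" if "k < n" for k
    using assms(1) that by fastforce
  then have "(\<Sum>k<n. real (k + 1) * of_int (q k)) = (\<Sum>k<n. if k = k\<^sub>0 then real (k\<^sub>0 + 1) else 0)"
    by (intro sum.cong) simp_all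
  also have "\<dots> = real (k\<^sub>0 + 1)"
    using one[of k\<^sub>0] by simp
  finally show ?thesis .
qed

lemma perm_matrix_weighted_rows_decr:
  assumes "perm_matrix n Q"
  shows "decr n (\<lambda>a. \<Sum>k<n. real (k + 1) * of_int (Q a k)) = decr n (zvec n)"
proof -
  have "\<forall>a\<in>{..<n}. \<exists>k. {k'. k' < n \<and> Q a k' = 1} = {k}"
    using assms by (simp add: perm_matrix_def card_1_singleton_iff)
  from bchoice[OF this] obtain g where "\<forall>a\<in>{..<n}. {k. k < n \<and> Q a k = 1} = {g a}"
    by blast
  then have g: "{k. k < n \<and> Q a k = 1} = {g a}" if "a < n" for a
    using that by simp
  have g_one: "g a < n" "Q a (g a) = 1" if "a < n" for a
    using g[OF that] unfolding set_eq_iff by blast+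
  have weight: "(\<Sum>k<n. real (k + 1) * of_int (Q a k)) = real (Suc (g a))" if "a < n" for a
    using weighted_sum_unit_line[OF _ g[OF that]] assms that by (simp add: perm_matrix_def)
  have into: "g ` {..<n} \<subseteq> {..<n}"
    using g_one by auto
  have "inj_on g {..<n}"
  proof (rule inj_onI)
    fix a b assume a: "a \<in> {..<n}" and b: "b \<in> {..<n}" and "g a = g b"
    then have "a \<in> {c. c < n \<and> Q c (g a) = 1}" and "b \<in> {c. c < n \<and> Q c (g a) = 1}"
      using g_one(2)[of a] g_one(2)[of b] by simp_all
    moreover have "card {c. c < n \<and> Q c (g a) = 1} = 1"
      using assms g_one(1)[of a] a by (simp add: perm_matrix_def)
    ultimately show "a = b"
      by (metis card_1_singletonE singletonD)
  qed
  then have "bij_betw g {..<n} {..<n}"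
    using into by (simp add: bij_betw_def endo_inj_surj)
  then have "decr n (\<lambda>a. real (Suc (g a))) = decr n (\<lambda>t. real (Suc t))"
    by (rule decr_reindex)
  moreover have "decr n (\<lambda>a. \<Sum>k<n. real (k + 1) * of_int (Q a k)) = decr n (\<lambda>a. real (Suc (g a)))"
    using weight by (rule decr_cong)
  ultimately show ?thesis
    using decr_zvec by simp
qed

lemma ASHM_slices:
  assumes "ASHM n A"
  shows "i < n \<Longrightarrow> alt_sign_matrix n (A i)"
    and "j < n \<Longrightarrow> alt_sign_matrix n (\<lambda>i k. A i j k)"
  using assms by (simp_all add: ASHM_def alt_sign_matrix_def)

lemma perm_hypermatrix_slices:
  assumes "perm_hypermatrix n P"
  shows "i < n \<Longrightarrow> perm_matrix n (P i)"
    and "j < n \<Longrightarrow> perm_matrix n (\<lambda>i k. P i j k)"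
  using assms by (simp_all add: perm_hypermatrix_def perm_matrix_def)

theorem mainTheorem5:
  fixes n :: nat and A P :: hypermatrix
  assumes "ASHM n A" and "perm_hypermatrix n P"
  shows "lmaj n (Lmat n A) (Lmat n P) \<and>
         (\<forall>i<n. majorized n (\<lambda>j. Lmat n A i j) (zvec n)) \<and>
         (\<forall>j<n. majorized n (\<lambda>i. Lmat n A i j) (zvec n))"
proof -
  have rows_A: "\<forall>i<n. majorized n (\<lambda>j. Lmat n A i j) (zvec n)"
    using alt_sign_matrix_weighted_rows_majorized[OF ASHM_slices(1)[OF assms(1)]]
    by (simp add: Lmat_def)
  have cols_A: "\<forall>j<n. majorized n (\<lambda>i. Lmat n A i j) (zvec n)"
    using alt_sign_matrix_weighted_rows_majorized[OF ASHM_slices(2)[OF assms(1)]]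
    by (simp add: Lmat_def)
  have rows_P: "\<forall>i<n. decr n (\<lambda>j. Lmat n P i j) = decr n (zvec n)"
    using perm_matrix_weighted_rows_decr[OF perm_hypermatrix_slices(1)[OF assms(2)]]
    by (simp add: Lmat_def)
  have cols_P: "\<forall>j<n. decr n (\<lambda>i. Lmat n P i j) = decr n (zvec n)"
    using perm_matrix_weighted_rows_decr[OF perm_hypermatrix_slices(2)[OF assms(2)]]
    by (simp add: Lmat_def)
  have "lmaj n (Lmat n A) (Lmat n P)"
    using rows_A cols_A rows_P cols_P by (simp add: lmaj_def majorized_def)
  with rows_A cols_A show ?thesis
    by blast
qed

end
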